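(* Let $n\ge3$. Let $g(x)=g(|x|)$ with $g\in C_0^2([0,\infty))$, $\operatorname{supp}g\subset\{|x|\le k\}$ for some $k>0$, and suppose there is $k_0$ with $0<k_0<k$ such that $g(|x|)>0$ for $k_0<|x|<k$. Let $V(x,t)=\frac{t}{\omega_n}\int_{|\omega|=1}g(x+t\omega)\,dS_\omega$, which is radial in $x$; write $V(r,t)$ with $r=|x|$. Set $k_1=\frac{k+k_0}{2}$ and $k_2=k-k_0$. Then there exists a constant $C_{n,g,k}>0$ such that \[ V(r,t)\ge\frac{C_{n,g,k}}{r^{n-2}}\qquad\text{for } t+k_0<r<t+k_1,\ t\ge k_2 . \]
   Context: $\omega_n=2\pi^{n/2}/\Gamma(n/2)$ is the measure of the unit sphere in $\mathbb{R}^n$. *)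

theory Defs
  imports "HOL-Analysis.Analysis"
begin

definition sphere_measure :: "nat \<Rightarrow> real" where
  "sphere_measure n = 2 * pi powr (real n / 2) / Gamma (real n / 2)"

text \<open>Integral of f over the unit sphere S^(n-1) in R^n with respect to surface measure,
  expressed via the cone (polar coordinates) construction of the surface measure:
  the surface measure of A is n times the Lebesgue volume of the cone
  {r w : 0 < r <= 1, w in A}.\<close>
definition sphere_integral :: "(real ^ 'n \<Rightarrow> real) \<Rightarrow> real" where
  "sphere_integral f =
     real CARD('n) * (LINT y : ball 0 1 | lborel. f (y /\<^sub>R norm y))"

definition C2_on_nonneg :: "(real \<Rightarrow> real) \<Rightarrow> bool" where
  "C2_on_nonneg g \<longleftrightarrow> (\<exists>g1 g2.
      (\<forall>s\<ge>0. (g has_real_derivative g1 s) (at s within {0..})) \<and>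
      (\<forall>s\<ge>0. (g1 has_real_derivative g2 s) (at s within {0..})) \<and>
      continuous_on {0..} g2)"

definition Vfun :: "(real \<Rightarrow> real) \<Rightarrow> real ^ 'n \<Rightarrow> real \<Rightarrow> real" where
  "Vfun g x t = t / sphere_measure CARD('n) *
      sphere_integral (\<lambda>w::real ^ 'n. g (norm (x + t *\<^sub>R w)))"

end

theory Submission
  imports Defs
begin

text \<open>Put \<open>r = |x|\<close> and \<open>e = -x/r\<close>. For a unit vector \<open>u\<close>,
  \<open>|x + t u|\<^sup>2 = (r - t)\<^sup>2 + 2 t r (1 - u\<cdot>e)\<close>, and in the region considered \<open>k\<^sub>0 < r - t < k\<^sub>1\<close>
  while \<open>t/r \<ge> k\<^sub>2/(k\<^sub>2 + k\<^sub>1)\<close>. Hence for the directions with \<open>1 - u\<cdot>e\<close> of order \<open>1/r\<^sup>2\<close> the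
  distance \<open>|x + t u|\<close> stays in a fixed compact subinterval of \<open>(k\<^sub>0, k)\<close>, where \<open>g \<ge> m > 0\<close>;
  on the rest of the sphere the integrand is nonnegative. These directions have surface measure
  of order \<open>r^(1-n)\<close>, so \<open>V \<ge> c (t/r) r^(2-n)\<close>. Instead of computing the measure of a cap, the
  set is realised in the cone picture of the surface measure as \<open>N \<approx> r\<close> disjoint balls of
  radius \<open>\<rho> = \<delta>/N\<close> strung along \<open>e\<close>; they are shifted off the axis by \<open>2\<rho>\<close> so that
  \<open>1 - u\<cdot>e \<ge> \<rho>\<^sup>2/2\<close>, which keeps \<open>|x + t u|\<close> away from \<open>k\<^sub>0\<close> even when \<open>r - t\<close> is close to \<open>k\<^sub>0\<close>.\<close>

lemma one_minus_div_sqrt_bounds: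
  fixes z P :: real
  assumes "1/2 < z" "z < 3/4" "0 < P" "z\<^sup>2 + P < 1"
  shows "P / 2 \<le> 1 - z / sqrt (z\<^sup>2 + P)" and "1 - z / sqrt (z\<^sup>2 + P) \<le> 2 * P"
proof -
  define N where "N = sqrt (z\<^sup>2 + P)"
  have "sqrt (z\<^sup>2) < N" unfolding N_def using assms by (intro real_sqrt_less_mono) auto
  then have Nz: "z < N" using assms by simp
  have N1: "N < 1" unfolding N_def using assms by simp
  have Npos: "0 < N" using Nz assms by linarith
  have "(N - z) * (N + z) = P"
    unfolding N_def using assms by (simp add: algebra_simps power2_eq_square)
  then have diff: "N - z = P / (N + z)" using Npos Nz assms by (simp add: eq_divide_eq)
  have "1 - z / N = (N - z) / N" using Npos by (simp add: diff_divide_distrib)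
  also have "\<dots> = P / (N * (N + z))" unfolding diff by (simp add: mult.commute)
  finally have eq: "1 - z / N = P / (N * (N + z))" .
  have "N * (N + z) \<le> N + z" using mult_right_mono[of N 1 "N + z"] N1 Nz Npos assms by simp
  then have "N * (N + z) \<le> 2" using N1 assms by linarith
  moreover have "1/2 * 1 \<le> N * (N + z)" using Nz assms by (intro mult_mono) auto
  ultimately have D: "1/2 \<le> N * (N + z)" "N * (N + z) \<le> 2" by simp_all
  have "P / 2 \<le> P / (N * (N + z))" by (rule divide_left_mono) (use D assms in auto)
  then show "P / 2 \<le> 1 - z / N" unfolding eq .
  have "P / (N * (N + z)) \<le> P / (1/2)" by (rule divide_left_mono) (use D assms in auto)
  then show "1 - z / N \<le> 2 * P" unfolding eq by simp
qed

lemma scaled_gap_bounds: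
  fixes r t \<rho> c \<theta> \<delta> \<delta>' :: real
  assumes t: "0 < t" "t \<le> r" "\<theta> \<le> t / r"
    and \<rho>: "0 \<le> \<delta>'" "\<delta>' \<le> r * \<rho>" "r * \<rho> \<le> \<delta>"
    and c: "\<rho>\<^sup>2 / 2 \<le> c" "c \<le> 18 * \<rho>\<^sup>2"
  shows "\<theta> * \<delta>'\<^sup>2 \<le> 2 * t * r * c" and "2 * t * r * c \<le> 36 * \<delta>\<^sup>2"
proof -
  have tr: "0 \<le> t / r" "t / r \<le> 1" "0 \<le> 2 * t * r" using t by auto
  have rescale: "t * r * \<rho>\<^sup>2 = t / r * (r * \<rho>)\<^sup>2"
    using t by (simp add: field_simps power2_eq_square)
  have sq: "\<delta>'\<^sup>2 \<le> (r * \<rho>)\<^sup>2" "(r * \<rho>)\<^sup>2 \<le> \<delta>\<^sup>2"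
    using \<rho> by (auto intro: power_mono)
  have "\<theta> * \<delta>'\<^sup>2 \<le> t / r * \<delta>'\<^sup>2" using t by (intro mult_right_mono) auto
  also have "\<dots> \<le> t / r * (r * \<rho>)\<^sup>2" using sq tr by (intro mult_left_mono) auto
  also have "\<dots> = t * r * \<rho>\<^sup>2" by (rule rescale[symmetric])
  also have "\<dots> = 2 * t * r * (\<rho>\<^sup>2 / 2)" by simp
  also have "\<dots> \<le> 2 * t * r * c" using tr c by (intro mult_left_mono) auto
  finally show "\<theta> * \<delta>'\<^sup>2 \<le> 2 * t * r * c" .
  have "2 * t * r * c \<le> 2 * t * r * (18 * \<rho>\<^sup>2)" using tr c by (intro mult_left_mono) auto
  also have "\<dots> = 36 * (t * r * \<rho>\<^sup>2)" by simp
  also have "\<dots> \<le> 36 * (r * \<rho>)\<^sup>2"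
    using tr mult_right_mono[OF tr(2), of "(r * \<rho>)\<^sup>2"] by (simp add: rescale)
  also have "\<dots> \<le> 36 * \<delta>\<^sup>2" using sq by simp
  finally show "2 * t * r * c \<le> 36 * \<delta>\<^sup>2" .
qed

lemma ratio_lower_bound:
  fixes a b t r :: real
  assumes "0 < a" "0 < b" "a \<le> t" "0 < r" "r < t + b"
  shows "a / (a + b) \<le> t / r"
proof -
  have "a * r \<le> a * (t + b)" using assms by (intro mult_left_mono) auto
  also have "\<dots> \<le> t * (a + b)" using mult_right_mono[of a t b] assms by (simp add: algebra_simps)
  finally show ?thesis using assms by (simp add: field_simps)
qed

lemma exists_subdivision_step:
  fixes k r \<delta> \<delta>' :: real
  assumes k: "0 < k" "k \<le> r" and \<delta>: "0 < \<delta>" "0 \<le> \<delta>'" "\<delta>' * (1 + k) \<le> \<delta> * k"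
  shows "\<exists>N::nat. 0 < N \<and> \<delta>' \<le> r * (\<delta> / real N) \<and> r * (\<delta> / real N) \<le> \<delta>"
proof (intro exI conjI)
  define N where "N = nat \<lceil>r\<rceil>"
  have N: "r \<le> real N" "real N \<le> r + 1" unfolding N_def using k by linarith+
  then show "0 < N" using k by auto
  have "r * \<delta> \<le> real N * \<delta>" using N \<delta> by (intro mult_right_mono) auto
  then show "r * (\<delta> / real N) \<le> \<delta>" using N k by (simp add: field_simps)
  have kN: "k * real N \<le> k * (r + 1)" using N k by (intro mult_left_mono) auto
  have "\<delta>' * (1 + k) * real N \<le> \<delta> * k * real N" using \<delta> by (intro mult_right_mono) auto
  also have "\<dots> \<le> \<delta> * (k * (r + 1))" using \<delta> kN by (simp add: mult.assoc mult_left_mono)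
  also have "\<dots> \<le> \<delta> * r * (1 + k)" using \<delta> k by (simp add: algebra_simps)
  finally have "(\<delta>' * real N) * (1 + k) \<le> (\<delta> * r) * (1 + k)" by (simp add: mult_ac)
  then have "\<delta>' * real N \<le> \<delta> * r" using mult_right_le_imp_le k by simp
  then show "\<delta>' \<le> r * (\<delta> / real N)" using N k by (simp add: field_simps)
qed

lemma off_axis_ball_bounds:
  fixes e f y :: "'a::real_inner"
  assumes e: "norm e = 1" and f: "norm f = 1" and ef: "e \<bullet> f = 0"
    and \<rho>: "0 < \<rho>" "\<rho> \<le> 1/40" and s: "11/20 \<le> s" "s \<le> 13/20"
    and y: "dist y (s *\<^sub>R e + (2 * \<rho>) *\<^sub>R f) < \<rho>"
  shows "1/2 < y \<bullet> e \<and> y \<bullet> e < 3/4 \<and> \<rho>\<^sup>2 < y \<bullet> y - (y \<bullet> e)\<^sup>2 \<and> y \<bullet> y - (y \<bullet> e)\<^sup>2 < 9 * \<rho>\<^sup>2"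
proof -
  define v where "v = y - (s *\<^sub>R e + (2 * \<rho>) *\<^sub>R f)"
  define q where "q = v - (v \<bullet> e) *\<^sub>R e"
  have ee: "e \<bullet> e = 1" using e by (simp add: norm_eq_1)
  have nv: "norm v < \<rho>" using y by (simp add: v_def dist_norm)
  have ve: "\<bar>v \<bullet> e\<bar> < \<rho>" using Cauchy_Schwarz_ineq2[of v e] e nv by simp
  have ye: "y \<bullet> e = s + v \<bullet> e"
    using ee ef by (simp add: v_def algebra_simps inner_commute[of f e])
  have "q \<bullet> q = v \<bullet> v - (v \<bullet> e)\<^sup>2"
    using ee by (simp add: q_def inner_diff_left inner_diff_right inner_commute power2_eq_square)
  then have "(norm q)\<^sup>2 \<le> (norm v)\<^sup>2" by (simp add: power2_norm_eq_inner)
  then have nq: "norm q < \<rho>" using nv power2_le_imp_le[of "norm q" "norm v"] by simp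
  have "y = s *\<^sub>R e + (2 * \<rho>) *\<^sub>R f + v" by (simp add: v_def)
  then have "y - (y \<bullet> e) *\<^sub>R e = (2 * \<rho>) *\<^sub>R f + q"
    unfolding ye q_def by (simp add: algebra_simps)
  moreover have "(norm (y - (y \<bullet> e) *\<^sub>R e))\<^sup>2 = y \<bullet> y - (y \<bullet> e)\<^sup>2"
    unfolding power2_norm_eq_inner using ee
    by (simp add: inner_diff_left inner_diff_right inner_commute power2_eq_square)
  ultimately have P: "y \<bullet> y - (y \<bullet> e)\<^sup>2 = (norm ((2 * \<rho>) *\<^sub>R f + q))\<^sup>2" by simp
  have "norm ((2 * \<rho>) *\<^sub>R f + q) \<le> 2 * \<rho> + norm q"
    using norm_triangle_ineq[of "(2 * \<rho>) *\<^sub>R f" q] f \<rho> by simp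
  moreover have "2 * \<rho> - norm q \<le> norm ((2 * \<rho>) *\<^sub>R f + q)"
    using norm_diff_ineq[of "(2 * \<rho>) *\<^sub>R f" q] f \<rho> by simp
  ultimately have "\<rho> < norm ((2 * \<rho>) *\<^sub>R f + q)" "norm ((2 * \<rho>) *\<^sub>R f + q) < 3 * \<rho>"
    using nq by linarith+
  then have "\<rho>\<^sup>2 < (norm ((2 * \<rho>) *\<^sub>R f + q))\<^sup>2" "(norm ((2 * \<rho>) *\<^sub>R f + q))\<^sup>2 < (3 * \<rho>)\<^sup>2"
    using \<rho> by (intro power_strict_mono; simp)+
  then show ?thesis using ye ve s \<rho> P by (auto simp: power_mult_distrib)
qed

lemma cap_direction_bounds:
  fixes e f y :: "'a::real_inner"
  assumes e: "norm e = 1" and f: "norm f = 1" and ef: "e \<bullet> f = 0"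
    and \<rho>: "0 < \<rho>" "\<rho> \<le> 1/40" and s: "11/20 \<le> s" "s \<le> 13/20"
    and y: "dist y (s *\<^sub>R e + (2 * \<rho>) *\<^sub>R f) < \<rho>"
  shows "y \<noteq> 0 \<and> norm y < 1 \<and> \<rho>\<^sup>2 / 2 \<le> 1 - (y /\<^sub>R norm y) \<bullet> e
         \<and> 1 - (y /\<^sub>R norm y) \<bullet> e \<le> 18 * \<rho>\<^sup>2"
proof -
  define z where "z = y \<bullet> e"
  define P where "P = y \<bullet> y - z\<^sup>2"
  have G: "1/2 < z" "z < 3/4" "\<rho>\<^sup>2 < P" "P < 9 * \<rho>\<^sup>2"
    using off_axis_ball_bounds[OF assms] unfolding z_def P_def by auto
  have "z\<^sup>2 < (3/4)\<^sup>2" using G by (intro power_strict_mono) auto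
  moreover have "9 * \<rho>\<^sup>2 \<le> 9 * (1/40)\<^sup>2" using \<rho> by (intro mult_left_mono power_mono) auto
  ultimately have lt1: "z\<^sup>2 + P < 1" using G by (simp add: power2_eq_square)
  have P0: "0 < P" using G(3) zero_le_power2[of \<rho>] by linarith
  have ny: "norm y = sqrt (z\<^sup>2 + P)" unfolding P_def by (simp add: norm_eq_sqrt_inner)
  have "(y /\<^sub>R norm y) \<bullet> e = z / norm y" by (simp add: z_def divide_inverse mult.commute)
  moreover have "y \<noteq> 0" using G(1) by (auto simp: z_def)
  ultimately show ?thesis
    using one_minus_div_sqrt_bounds[OF G(1,2) P0 lt1] G(3,4) lt1 ny by auto
qed

lemma norm_diff_scaled_units_sq:
  fixes e u :: "'a::real_inner"
  assumes "norm e = 1" "norm u = 1"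
  shows "(norm (t *\<^sub>R u - r *\<^sub>R e))\<^sup>2 = (r - t)\<^sup>2 + 2 * t * r * (1 - u \<bullet> e)"
proof -
  have "e \<bullet> e = 1" "u \<bullet> u = 1" using assms by (simp_all add: norm_eq_1)
  moreover have "(norm (t *\<^sub>R u - r *\<^sub>R e))\<^sup>2
      = t\<^sup>2 * (u \<bullet> u) - 2 * t * r * (u \<bullet> e) + r\<^sup>2 * (e \<bullet> e)"
    unfolding power2_norm_eq_inner
    by (simp add: inner_diff_left inner_diff_right inner_commute[of e u] algebra_simps power2_eq_square)
  ultimately show ?thesis by (simp add: algebra_simps power2_eq_square)
qed

lemma norm_sq_bounds_off_antipode:
  fixes x e u :: "'a::real_inner"
  assumes e: "norm e = 1" "x = - (r *\<^sub>R e)" and u: "norm u = 1"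
    and t: "0 < t" "\<theta> \<le> t / r" and rt: "k0 \<le> r - t" "r - t \<le> k1" "0 \<le> k0"
    and \<rho>: "0 \<le> \<delta>'" "\<delta>' \<le> r * \<rho>" "r * \<rho> \<le> \<delta>"
    and c: "\<rho>\<^sup>2 / 2 \<le> 1 - u \<bullet> e" "1 - u \<bullet> e \<le> 18 * \<rho>\<^sup>2"
  shows "k0\<^sup>2 + \<theta> * \<delta>'\<^sup>2 \<le> (norm (x + t *\<^sub>R u))\<^sup>2 \<and> (norm (x + t *\<^sub>R u))\<^sup>2 \<le> k1\<^sup>2 + 36 * \<delta>\<^sup>2"
proof -
  have "x + t *\<^sub>R u = t *\<^sub>R u - r *\<^sub>R e" using e(2) by simp
  then have eq: "(norm (x + t *\<^sub>R u))\<^sup>2 = (r - t)\<^sup>2 + 2 * t * r * (1 - u \<bullet> e)"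
    using norm_diff_scaled_units_sq[OF e(1) u] by simp
  have "k0\<^sup>2 \<le> (r - t)\<^sup>2" "(r - t)\<^sup>2 \<le> k1\<^sup>2" using rt by (auto intro: power_mono)
  moreover have "\<theta> * \<delta>'\<^sup>2 \<le> 2 * t * r * (1 - u \<bullet> e)" "2 * t * r * (1 - u \<bullet> e) \<le> 36 * \<delta>\<^sup>2"
    using scaled_gap_bounds[OF t(1) _ t(2) \<rho> c] rt by auto
  ultimately show ?thesis unfolding eq by linarith
qed

lemma exists_unit_orthogonal:
  fixes e :: "'a::euclidean_space"
  assumes "2 \<le> DIM('a)"
  shows "\<exists>f. norm f = 1 \<and> e \<bullet> f = 0"
proof -
  have "dim (span {e}) < DIM('a)"
    using assms dim_le_card'[of "{e}"] by (simp add: dim_span)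
  then have "span {e} \<noteq> UNIV" by (metis dim_UNIV order_less_irrefl)
  then obtain a where "a \<noteq> 0" "\<forall>x\<in>span {e}. a \<bullet> x = 0"
    using span_not_UNIV_orthogonal by blast
  then show ?thesis
    by (intro exI[of _ "a /\<^sub>R norm a"]) (auto simp: span_base inner_commute)
qed

lemma measure_Union_balls_on_line:
  fixes a e :: "'a::euclidean_space"
  assumes e: "norm e = 1" and \<rho>: "0 \<le> \<rho>" "2 * \<rho> \<le> d"
  shows "measure lborel (\<Union>i<N. ball (a + (d * real i) *\<^sub>R e) \<rho>)
         = real N * unit_ball_vol DIM('a) * \<rho> ^ DIM('a)"
proof -
  have "disjoint_family_on (\<lambda>i. ball (a + (d * real i) *\<^sub>R e) \<rho>) {..<N}"
    unfolding disjoint_family_on_def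
  proof (intro ballI impI disjoint_ballI)
    fix i j assume "i \<in> {..<N}" "j \<in> {..<N}" "i \<noteq> j"
    then have "1 \<le> \<bar>real i - real j\<bar>"
      by (cases "i < j") (auto simp: of_nat_less_iff[symmetric] simp del: of_nat_less_iff)
    then have "d \<le> d * \<bar>real i - real j\<bar>" using \<rho> mult_left_mono[of 1 _ d] by auto
    moreover have "dist (a + (d * real i) *\<^sub>R e) (a + (d * real j) *\<^sub>R e)
                   = norm ((d * (real i - real j)) *\<^sub>R e)"
      by (simp add: dist_norm algebra_simps)
    moreover have "norm ((d * (real i - real j)) *\<^sub>R e) = d * \<bar>real i - real j\<bar>"
      using e \<rho> by (simp add: abs_mult)
    ultimately show "\<rho> + \<rho> \<le> dist (a + (d * real i) *\<^sub>R e) (a + (d * real j) *\<^sub>R e)"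
      using \<rho> by linarith
  qed
  then have "measure lborel (\<Union>i<N. ball (a + (d * real i) *\<^sub>R e) \<rho>)
             = (\<Sum>i<N. measure lborel (ball (a + (d * real i) *\<^sub>R e) \<rho>))"
    by (intro measure_finite_Union) (use emeasure_lborel_ball_finite in \<open>auto simp: less_top\<close>)
  also have "\<dots> = real N * unit_ball_vol DIM('a) * \<rho> ^ DIM('a)"
    using \<rho> by (simp add: content_ball)
  finally show ?thesis .
qed

lemma exists_balls_in_cap:
  fixes e :: "'a::euclidean_space"
  assumes dim: "2 \<le> DIM('a)" and e: "norm e = 1" and \<rho>: "0 < \<rho>" "real N * \<rho> \<le> 1/40"
  shows "\<exists>S. S \<subseteq> ball 0 1 \<and> S \<in> sets lborel
           \<and> measure lborel S = real N * unit_ball_vol DIM('a) * \<rho> ^ DIM('a)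
           \<and> (\<forall>y\<in>S. y \<noteq> 0 \<and> \<rho>\<^sup>2 / 2 \<le> 1 - (y /\<^sub>R norm y) \<bullet> e
                        \<and> 1 - (y /\<^sub>R norm y) \<bullet> e \<le> 18 * \<rho>\<^sup>2)"
proof -
  obtain f where f: "norm f = 1" "e \<bullet> f = 0" using exists_unit_orthogonal[OF dim] by blast
  define a where "a = (11/20) *\<^sub>R e + (2 * \<rho>) *\<^sub>R f"
  define S where "S = (\<Union>i<N. ball (a + (4 * \<rho> * real i) *\<^sub>R e) \<rho>)"
  have bounds: "y \<noteq> 0 \<and> norm y < 1 \<and> \<rho>\<^sup>2 / 2 \<le> 1 - (y /\<^sub>R norm y) \<bullet> e
                \<and> 1 - (y /\<^sub>R norm y) \<bullet> e \<le> 18 * \<rho>\<^sup>2" if "y \<in> S" for y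
  proof -
    obtain i where i: "i < N" "dist y (a + (4 * \<rho> * real i) *\<^sub>R e) < \<rho>"
      using \<open>y \<in> S\<close> by (auto simp: S_def dist_commute)
    have "a + (4 * \<rho> * real i) *\<^sub>R e = (11/20 + 4 * \<rho> * real i) *\<^sub>R e + (2 * \<rho>) *\<^sub>R f"
      by (simp add: a_def algebra_simps)
    moreover have "4 * \<rho> * real i \<le> 4 * \<rho> * real N" using i(1) \<rho> by (intro mult_left_mono) auto
    then have "4 * \<rho> * real i \<le> 1/10" using \<rho>(2) by (simp add: mult_ac)
    moreover have "\<rho> \<le> real N * \<rho>" using mult_right_mono[of 1 "real N" \<rho>] i(1) \<rho> by simp
    then have "\<rho> \<le> 1/40" using \<rho>(2) by linarith
    ultimately show ?thesis
      using cap_direction_bounds[OF e f, of \<rho> "11/20 + 4 * \<rho> * real i" y] i \<rho> by auto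
  qed
  have "measure lborel S = real N * unit_ball_vol DIM('a) * \<rho> ^ DIM('a)"
    unfolding S_def using e \<rho> by (intro measure_Union_balls_on_line) auto
  moreover have "S \<in> sets lborel" by (simp add: S_def borel_open)
  moreover have "S \<subseteq> ball 0 1" using bounds by auto
  ultimately show ?thesis using bounds by blast
qed

lemma sphere_integral_ge_measure:
  fixes f :: "real ^ 'n \<Rightarrow> real"
  assumes cont: "continuous_on UNIV f" and nonneg: "\<And>w. norm w \<le> 1 \<Longrightarrow> 0 \<le> f w"
    and S: "S \<subseteq> ball 0 1" "S \<in> sets lborel" and m: "\<And>y. y \<in> S \<Longrightarrow> m \<le> f (y /\<^sub>R norm y)"
  shows "real CARD('n) * (m * measure lborel S) \<le> sphere_integral f"
proof -
  define F where "F = (\<lambda>y::real ^ 'n. indicator (ball 0 1) y *\<^sub>R f (y /\<^sub>R norm y))"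
  have unit: "norm (y /\<^sub>R norm y) \<le> 1" for y :: "real ^ 'n" by (cases "y = 0") auto
  have "bounded (f ` cball 0 1)"
    by (intro compact_imp_bounded compact_continuous_image continuous_on_subset[OF cont]) auto
  then obtain B where B: "\<And>w. w \<in> cball 0 1 \<Longrightarrow> \<bar>f w\<bar> \<le> B"
    unfolding bounded_real by blast
  have "f \<in> borel_measurable borel" using cont by (rule borel_measurable_continuous_onI)
  then have "(\<lambda>y. f (y /\<^sub>R norm y)) \<in> borel_measurable lborel" by measurable
  then have "integrable lborel F"
    unfolding F_def
    by (intro integrableI_bounded_set_indicator[where B=B]) (use B unit emeasure_lborel_ball_finite in auto)
  moreover have "m * indicator S y \<le> F y" "0 \<le> F y" for y
    using S m[of y] nonneg[OF unit[of y]] by (auto simp: F_def indicator_def)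
  ultimately have "integral\<^sup>L lborel (\<lambda>y. m * indicator S y) \<le> integral\<^sup>L lborel F"
    by (intro integral_mono') auto
  then show ?thesis
    by (simp add: sphere_integral_def set_lebesgue_integral_def F_def)
qed

lemma C2_on_nonneg_imp_continuous:
  assumes "C2_on_nonneg g"
  shows "continuous_on {0..} g"
proof -
  obtain g1 where "\<forall>s\<ge>0. (g has_real_derivative g1 s) (at s within {0..})"
    using assms unfolding C2_on_nonneg_def by blast
  then show ?thesis
    unfolding continuous_on_eq_continuous_within by (auto intro: DERIV_continuous)
qed

locale radial_profile =
  fixes g :: "real \<Rightarrow> real" and k k0 :: real
  assumes continuous: "continuous_on {0..} g"
    and k0_pos: "0 < k0" and k0_less_k: "k0 < k"
    and vanishes: "\<forall>s\<ge>0. s > k \<longrightarrow> g s = 0"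
    and positive: "\<forall>s. k0 < s \<and> s < k \<longrightarrow> 0 < g s"
begin

lemma vanishes_at_k: "g k = 0"
proof -
  have "(g \<longlongrightarrow> g k) (at k within {0..})"
    using continuous k0_pos k0_less_k by (simp add: continuous_on_def)
  then have "(g \<longlongrightarrow> g k) (at_right k)"
    by (rule tendsto_within_subset) (use k0_pos k0_less_k in auto)
  moreover have "(g \<longlongrightarrow> 0) (at_right k)"
    using vanishes k0_pos k0_less_k
    by (intro tendsto_eventually) (auto simp: eventually_at_right_field intro!: exI[of _ "k + 1"])
  ultimately show ?thesis using tendsto_unique trivial_limit_at_right_real by blast
qed

lemma nonneg: "k0 < s \<Longrightarrow> 0 \<le> g s"
  using positive vanishes vanishes_at_k k0_pos
  by (cases s k rule: linorder_cases) (auto intro: less_imp_le)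

lemma uniform_positive_lower_bound:
  assumes "k0 < a" "b < k"
  shows "\<exists>m>0. \<forall>s\<in>{a..b}. m \<le> g s"
proof (cases "a \<le> b")
  case True
  have "continuous_on {a..b} g"
    using assms k0_pos by (intro continuous_on_subset[OF continuous]) auto
  then obtain s0 where "s0 \<in> {a..b}" "\<forall>s\<in>{a..b}. g s0 \<le> g s"
    using continuous_attains_inf[OF compact_Icc] True by (metis atLeastatMost_empty_iff2)
  then show ?thesis using positive assms by (intro exI[of _ "g s0"]) auto
qed (auto intro: exI[of _ 1])

lemma uniform_positive_lower_bound_sq:
  assumes "k0\<^sup>2 < L" "U < k\<^sup>2"
  shows "\<exists>m>0. \<forall>s\<ge>0. L \<le> s\<^sup>2 \<and> s\<^sup>2 \<le> U \<longrightarrow> m \<le> g s"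
proof -
  have "k0 < sqrt L" "sqrt U < k"
    using assms k0_pos k0_less_k by (auto intro: real_less_rsqrt real_less_lsqrt)
  then obtain m where "0 < m" "\<forall>s\<in>{sqrt L..sqrt U}. m \<le> g s"
    using uniform_positive_lower_bound by blast
  then show ?thesis using real_le_lsqrt real_le_rsqrt by (auto intro!: exI[of _ m])
qed

lemma Vfun_ge_measure:
  fixes x :: "real ^ 'n"
  assumes t: "0 \<le> t" "t + k0 < norm x" and S: "S \<subseteq> ball 0 1" "S \<in> sets lborel"
    and m: "\<And>y. y \<in> S \<Longrightarrow> m \<le> g (norm (x + t *\<^sub>R (y /\<^sub>R norm y)))"
  shows "t / sphere_measure CARD('n) * (real CARD('n) * (m * measure lborel S)) \<le> Vfun g x t"
proof -
  have "real CARD('n) * (m * measure lborel S) \<le> sphere_integral (\<lambda>w::real ^ 'n. g (norm (x + t *\<^sub>R w)))"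
  proof (rule sphere_integral_ge_measure[OF _ _ S])
    show "continuous_on UNIV (\<lambda>w::real ^ 'n. g (norm (x + t *\<^sub>R w)))"
      by (rule continuous_on_compose2[OF continuous]) (auto intro!: continuous_intros)
    fix w :: "real ^ 'n" assume "norm w \<le> 1"
    then have "norm (t *\<^sub>R w) \<le> t" using t by (simp add: mult_left_le)
    then have "k0 < norm (x + t *\<^sub>R w)" using norm_diff_ineq[of x "t *\<^sub>R w"] t by linarith
    then show "0 \<le> g (norm (x + t *\<^sub>R w))" by (rule nonneg)
  qed (rule m)
  moreover have "0 \<le> t / sphere_measure CARD('n)" using t by (simp add: sphere_measure_def)
  ultimately show ?thesis unfolding Vfun_def by (rule mult_left_mono)
qed

lemma Vfun_ge_at:
  fixes x :: "real ^ 'n" and \<theta> \<delta> \<delta>' k1 m t :: real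
  assumes n: "2 \<le> CARD('n)" and \<delta>: "0 < \<delta>" "\<delta> \<le> 1/40" "0 \<le> \<delta>'" "\<delta>' * (1 + k) \<le> \<delta> * k"
    and m: "0 \<le> m" "\<And>s. 0 \<le> s \<Longrightarrow> k0\<^sup>2 + \<theta> * \<delta>'\<^sup>2 \<le> s\<^sup>2 \<Longrightarrow> s\<^sup>2 \<le> k1\<^sup>2 + 36 * \<delta>\<^sup>2 \<Longrightarrow> m \<le> g s"
    and t: "0 < t" "\<theta> \<le> t / norm x"
    and r: "k \<le> norm x" "k0 < norm x - t" "norm x - t < k1"
  shows "t / sphere_measure CARD('n) * (real CARD('n) * (m * (unit_ball_vol CARD('n)
           * \<delta> * (\<delta>' / norm x) ^ (CARD('n) - 1)))) \<le> Vfun g x t"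
proof -
  define r where "r = norm x"
  obtain j where j: "CARD('n) = 2 + j" using n by (auto simp: nat_le_iff_add)
  have r0: "0 < r" using r k0_pos k0_less_k unfolding r_def by linarith
  obtain N :: nat where N: "0 < N" "\<delta>' \<le> r * (\<delta> / real N)" "r * (\<delta> / real N) \<le> \<delta>"
    using exists_subdivision_step[of k r \<delta> \<delta>'] r \<delta> k0_pos k0_less_k by (auto simp: r_def)
  define \<rho> where "\<rho> = \<delta> / real N"
  have \<rho>: "0 < \<rho>" "real N * \<rho> = \<delta>" using N \<delta> by (auto simp: \<rho>_def)
  define e where "e = - (x /\<^sub>R r)"
  have e: "norm e = 1" "x = - (r *\<^sub>R e)" using r0 by (auto simp: e_def r_def)
  obtain S where S: "S \<subseteq> ball 0 1" "S \<in> sets lborel"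
      "measure lborel S = real N * unit_ball_vol CARD('n) * \<rho> ^ CARD('n)"
    and cap: "\<And>y. y \<in> S \<Longrightarrow> y \<noteq> 0 \<and> \<rho>\<^sup>2 / 2 \<le> 1 - (y /\<^sub>R norm y) \<bullet> e
                               \<and> 1 - (y /\<^sub>R norm y) \<bullet> e \<le> 18 * \<rho>\<^sup>2"
    using exists_balls_in_cap[of e \<rho> N] n e \<rho> \<delta> by auto
  have "m \<le> g (norm (x + t *\<^sub>R (y /\<^sub>R norm y)))" if "y \<in> S" for y
    using norm_sq_bounds_off_antipode[OF e, of "y /\<^sub>R norm y" t \<theta> k0 k1 \<delta>' \<rho> \<delta>]
      cap[OF that] t r k0_pos \<delta> N m(2)[of "norm (x + t *\<^sub>R (y /\<^sub>R norm y))"]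
    by (simp add: r_def \<rho>_def)
  note V_ge = Vfun_ge_measure[OF _ _ S(1,2) this]
  have "(\<delta>' / r) ^ (CARD('n) - 1) \<le> \<rho> ^ (CARD('n) - 1)"
    using N r0 \<delta> by (intro power_mono) (auto simp: \<rho>_def pos_divide_le_eq mult.commute)
  moreover have "measure lborel S = unit_ball_vol CARD('n) * (real N * \<rho>) * \<rho> ^ (CARD('n) - 1)"
    using S(3) by (simp add: j mult_ac)
  ultimately have "unit_ball_vol CARD('n) * \<delta> * (\<delta>' / r) ^ (CARD('n) - 1) \<le> measure lborel S"
    using \<rho>(2) \<delta> by (simp add: mult_left_mono)
  then have "t / sphere_measure CARD('n) * (real CARD('n) * (m * (unit_ball_vol CARD('n)
               * \<delta> * (\<delta>' / r) ^ (CARD('n) - 1))))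
             \<le> t / sphere_measure CARD('n) * (real CARD('n) * (m * measure lborel S))"
    using m(1) t by (intro mult_left_mono) (auto simp: sphere_measure_def)
  also have "\<dots> \<le> Vfun g x t" using V_ge t r k0_pos by (simp add: r_def)
  finally show ?thesis unfolding r_def .
qed

lemma Vfun_lower_bound:
  assumes n: "2 \<le> CARD('n)"
  shows "\<exists>C>0. \<forall>(x::real ^ 'n) t. t \<ge> k - k0 \<and> t + k0 < norm x \<and> norm x < t + (k + k0) / 2
           \<longrightarrow> Vfun g x t \<ge> C / norm x ^ (CARD('n) - 2)"
proof -
  obtain j where j: "CARD('n) = 2 + j" using n by (auto simp: nat_le_iff_add)
  define k1 where "k1 = (k + k0) / 2"
  define \<theta> where "\<theta> = (k - k0) / (k - k0 + k1)"
  \<comment> \<open>\<open>\<delta>\<close> makes \<open>k1\<^sup>2 + 36\<delta>\<^sup>2 < k\<^sup>2\<close>; \<open>\<delta>'\<close> bounds \<open>r\<delta>/\<lceil>r\<rceil>\<close> from below for all \<open>r \<ge> k\<close>.\<close>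
  define \<delta> where "\<delta> = min (1/40) ((k - k1) / 12)"
  define \<delta>' where "\<delta>' = \<delta> * k / (1 + k)"
  have k1: "k0 < k1" "k1 < k" using k0_less_k by (auto simp: k1_def)
  have \<theta>: "0 < \<theta>" using k1 k0_pos by (auto simp: \<theta>_def)
  have \<delta>: "0 < \<delta>" "\<delta> \<le> 1/40" "6 * \<delta> \<le> (k - k1) / 2" using k1 by (auto simp: \<delta>_def min_def)
  have \<delta>': "0 < \<delta>'" "\<delta>' * (1 + k) \<le> \<delta> * k" using \<delta> k0_pos k0_less_k by (auto simp: \<delta>'_def)
  have "(6 * \<delta>)\<^sup>2 \<le> ((k - k1) / 2)\<^sup>2" using \<delta> by (intro power_mono) auto
  also have "\<dots> = (k - k1) * ((k - k1) / 4)" by (simp add: power2_eq_square)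
  also have "\<dots> < (k - k1) * (k + k1)" using k1 k0_pos by (intro mult_strict_left_mono) auto
  also have "\<dots> = k\<^sup>2 - k1\<^sup>2" by (simp add: power2_eq_square algebra_simps)
  finally have "k1\<^sup>2 + 36 * \<delta>\<^sup>2 < k\<^sup>2" by (simp add: power_mult_distrib)
  moreover have "k0\<^sup>2 < k0\<^sup>2 + \<theta> * \<delta>'\<^sup>2" using \<theta> \<delta>' by simp
  ultimately obtain m where m: "0 < m"
    and m_le: "\<And>s. 0 \<le> s \<Longrightarrow> k0\<^sup>2 + \<theta> * \<delta>'\<^sup>2 \<le> s\<^sup>2 \<Longrightarrow> s\<^sup>2 \<le> k1\<^sup>2 + 36 * \<delta>\<^sup>2 \<Longrightarrow> m \<le> g s"
    using uniform_positive_lower_bound_sq by blast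
  define K where "K = real CARD('n) * (m * (unit_ball_vol CARD('n) * \<delta> * \<delta>' ^ (CARD('n) - 1)))
                      / sphere_measure CARD('n)"
  have K: "0 < K" using m \<delta> \<delta>' by (simp add: K_def sphere_measure_def)
  have "\<theta> * K / norm x ^ (CARD('n) - 2) \<le> Vfun g x t"
    if "t \<ge> k - k0" "t + k0 < norm x" "norm x < t + (k + k0) / 2" for x :: "real ^ 'n" and t
  proof -
    have r: "k \<le> norm x" "0 < norm x" "k0 < norm x - t" "norm x - t < k1" "0 < t"
      using that k0_pos k0_less_k unfolding k1_def by linarith+
    have "\<theta> \<le> t / norm x"
      unfolding \<theta>_def using that r k1 k0_pos by (intro ratio_lower_bound) auto
    then have "\<theta> * K / norm x ^ (CARD('n) - 2) \<le> t / norm x * K / norm x ^ (CARD('n) - 2)"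
      by (rule divide_right_mono[OF mult_right_mono]) (use K r in auto)
    also have "\<dots> = t / sphere_measure CARD('n) * (real CARD('n) * (m * (unit_ball_vol CARD('n)
                       * \<delta> * (\<delta>' / norm x) ^ (CARD('n) - 1))))"
    proof -
      have "norm x ^ (CARD('n) - 1) = norm x * norm x ^ (CARD('n) - 2)" by (simp add: j)
      moreover have "0 < sphere_measure CARD('n)" by (simp add: sphere_measure_def)
      ultimately show ?thesis using r by (simp add: K_def power_divide field_simps)
    qed
    also have "\<dots> \<le> Vfun g x t"
      by (rule Vfun_ge_at[OF n \<delta>(1,2) less_imp_le[OF \<delta>'(1)] \<delta>'(2) less_imp_le[OF m(1)] m_le])
        (use \<open>\<theta> \<le> t / norm x\<close> r in auto)
    finally show ?thesis .
  qed
  then show ?thesis using \<theta> K by (intro exI[of _ "\<theta> * K"]) auto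
qed

end

theorem lemma7p2:
  fixes g :: "real \<Rightarrow> real" and k k0 :: real
  assumes n3: "CARD('n) \<ge> 3"
    and C2: "C2_on_nonneg g"
    and kpos: "k > 0"
    and supp: "\<forall>s\<ge>0. s > k \<longrightarrow> g s = 0"
    and k0: "0 < k0" "k0 < k"
    and gpos: "\<forall>s. k0 < s \<and> s < k \<longrightarrow> g s > 0"
  shows "\<exists>C>0. \<forall>(x::real ^ 'n) t.
           t \<ge> k - k0 \<and> t + k0 < norm x \<and> norm x < t + (k + k0) / 2 \<longrightarrow>
           Vfun g x t \<ge> C / norm x ^ (CARD('n) - 2)"
proof -
  interpret radial_profile g k k0
    using C2_on_nonneg_imp_continuous[OF C2] k0 supp gpos by unfold_locales auto
  show ?thesis by (rule Vfun_lower_bound) (use n3 in linarith)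
qed

end
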